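(* Let $(\mathfrak{n},J,\langle\cdot,\cdot\rangle)$ be a Hermitian Lie algebra with $\mathfrak{n}$ $2$-step nilpotent. Then $\langle\cdot,\cdot\rangle$ is pluriclosed if and only if $J$ is $2$-step and $$\langle[Jy,Jz],[w,u]\rangle-\langle[Ju,Jz],[w,y]\rangle+\langle[Ju,Jy],[w,z]\rangle+\langle[Jw,Jz],[u,y]\rangle-\langle[Jw,Jy],[u,z]\rangle+\langle[Jw,Ju],[y,z]\rangle=0$$ for all $w,u,y,z\in\mathfrak{n}$. In particular, if $J$ is abelian, let $\mathfrak{z}$ be the center, $\mathfrak{v}=\mathfrak{z}^\perp$ and $j:\mathfrak{z}\to\operatorname{End}(\mathfrak{v})$ defined by $\langle j(x)v,w\rangle=\langle x,[v,w]\rangle$ for $x\in\mathfrak{z}$, $v,w\in\mathfrak{v}$; then $\langle\cdot,\cdot\rangle$ is pluriclosed if and only if $j([u,y])z+j([y,z])u+j([z,u])y=0$ for all $u,y,z\in\mathfrak{v}$.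
   Context: A complex structure on a real Lie algebra $\mathfrak{g}$ is a linear map $J$ with $J^2=-I$ and $N_J(x,y)=[x,y]+J([Jx,y]+[x,Jy])-[Jx,Jy]=0$; it is abelian if $[Jx,Jy]=[x,y]$ for all $x,y$. Define $\mathfrak{a}_0(J)=0$, $\mathfrak{a}_\ell(J)=\{x: [x,\mathfrak{g}]\subset\mathfrak{a}_{\ell-1}(J),\ [Jx,\mathfrak{g}]\subset\mathfrak{a}_{\ell-1}(J)\}$; $J$ is $t$-step if $t$ is the least integer with $\mathfrak{a}_t(J)=\mathfrak{g}$. A Hermitian Lie algebra is $(\mathfrak{g},J,\langle\cdot,\cdot\rangle)$ with $\langle Jx,Jy\rangle=\langle x,y\rangle$. Torsion 3-form: $c(x,y,z)=-\langle[Jx,Jy],z\rangle-\langle[Jy,Jz],x\rangle-\langle[Jz,Jx],y\rangle$; $\langle\cdot,\cdot\rangle$ is pluriclosed if $dc=0$ for the Chevalley–Eilenberg differential $d$. $\mathfrak{n}$ is $2$-step nilpotent if non-abelian with $[\mathfrak{n},\mathfrak{n}]$ central. *)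

theory Defs
  imports "HOL-Analysis.Analysis"
begin

text \<open>A real Lie algebra structure on a finite-dimensional real inner product space
  (type of class euclidean_space); the Hermitian metric is the inner product of the type.\<close>

definition lie_algebra :: "('a::real_vector \<Rightarrow> 'a \<Rightarrow> 'a) \<Rightarrow> bool" where
  "lie_algebra br \<longleftrightarrow> bilinear br \<and> (\<forall>x. br x x = 0) \<and>
     (\<forall>x y z. br x (br y z) + br y (br z x) + br z (br x y) = 0)"

definition nijenhuis :: "('a::real_vector \<Rightarrow> 'a \<Rightarrow> 'a) \<Rightarrow> ('a \<Rightarrow> 'a) \<Rightarrow> 'a \<Rightarrow> 'a \<Rightarrow> 'a" where
  "nijenhuis br J x y = br x y + J (br (J x) y + br x (J y)) - br (J x) (J y)"

definition complex_structure :: "('a::real_vector \<Rightarrow> 'a \<Rightarrow> 'a) \<Rightarrow> ('a \<Rightarrow> 'a) \<Rightarrow> bool" where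
  "complex_structure br J \<longleftrightarrow> linear J \<and> (\<forall>x. J (J x) = - x) \<and>
     (\<forall>x y. nijenhuis br J x y = 0)"

definition abelian_cs :: "('a::real_vector \<Rightarrow> 'a \<Rightarrow> 'a) \<Rightarrow> ('a \<Rightarrow> 'a) \<Rightarrow> bool" where
  "abelian_cs br J \<longleftrightarrow> (\<forall>x y. br (J x) (J y) = br x y)"

fun acs :: "('a::real_vector \<Rightarrow> 'a \<Rightarrow> 'a) \<Rightarrow> ('a \<Rightarrow> 'a) \<Rightarrow> nat \<Rightarrow> 'a set" where
  "acs br J 0 = {0}"
| "acs br J (Suc l) = {x. (\<forall>y. br x y \<in> acs br J l) \<and> (\<forall>y. br (J x) y \<in> acs br J l)}"

definition t_step :: "('a::real_vector \<Rightarrow> 'a \<Rightarrow> 'a) \<Rightarrow> ('a \<Rightarrow> 'a) \<Rightarrow> nat \<Rightarrow> bool" where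
  "t_step br J t \<longleftrightarrow> acs br J t = UNIV \<and> (\<forall>s<t. acs br J s \<noteq> UNIV)"

definition hermitian :: "('a::real_inner \<Rightarrow> 'a) \<Rightarrow> bool" where
  "hermitian J \<longleftrightarrow> (\<forall>x y. inner (J x) (J y) = inner x y)"

definition torsion :: "('a::real_inner \<Rightarrow> 'a \<Rightarrow> 'a) \<Rightarrow> ('a \<Rightarrow> 'a) \<Rightarrow> 'a \<Rightarrow> 'a \<Rightarrow> 'a \<Rightarrow> real" where
  "torsion br J x y z = - inner (br (J x) (J y)) z - inner (br (J y) (J z)) x - inner (br (J z) (J x)) y"

text \<open>Chevalley--Eilenberg differential of a 3-form on a Lie algebra:
  (d c)(x0,x1,x2,x3) = sum over i<j of (-1)^(i+j) c([xi,xj], remaining in order).\<close>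
definition ce_d3 :: "('a \<Rightarrow> 'a \<Rightarrow> 'a) \<Rightarrow> ('a \<Rightarrow> 'a \<Rightarrow> 'a \<Rightarrow> real) \<Rightarrow> 'a \<Rightarrow> 'a \<Rightarrow> 'a \<Rightarrow> 'a \<Rightarrow> real" where
  "ce_d3 br c x0 x1 x2 x3 =
     - c (br x0 x1) x2 x3 + c (br x0 x2) x1 x3 - c (br x0 x3) x1 x2
     - c (br x1 x2) x0 x3 + c (br x1 x3) x0 x2 - c (br x2 x3) x0 x1"

definition pluriclosed :: "('a::real_inner \<Rightarrow> 'a \<Rightarrow> 'a) \<Rightarrow> ('a \<Rightarrow> 'a) \<Rightarrow> bool" where
  "pluriclosed br J \<longleftrightarrow> (\<forall>x0 x1 x2 x3. ce_d3 br (torsion br J) x0 x1 x2 x3 = 0)"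

definition two_step_nilpotent :: "('a::real_vector \<Rightarrow> 'a \<Rightarrow> 'a) \<Rightarrow> bool" where
  "two_step_nilpotent br \<longleftrightarrow> (\<exists>x y. br x y \<noteq> 0) \<and> (\<forall>x y z. br (br x y) z = 0)"

definition lie_center :: "('a::real_vector \<Rightarrow> 'a \<Rightarrow> 'a) \<Rightarrow> 'a set" where
  "lie_center br = {x. \<forall>y. br x y = 0}"

definition jmap :: "('a::real_inner \<Rightarrow> 'a \<Rightarrow> 'a) \<Rightarrow> 'a \<Rightarrow> 'a \<Rightarrow> 'a" where
  "jmap br x v = (THE u. u \<in> orthogonal_comp (lie_center br) \<and>
      (\<forall>w \<in> orthogonal_comp (lie_center br). inner u w = inner x (br v w)))"

end

theory Submission
  imports Defs
begin

text \<open>For a central element s, integrability of J gives [Js,Jt] = J[Js,t], and by 2-step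
  nilpotency both d = [Js,t] and Jd = [Js,Jt] are central. Evaluating dc on (s, t, Js, Jt)
  then leaves only 2|d|^2, so a pluriclosed metric forces J to preserve the centre; for
  2-step nilpotent algebras J[n,n] \<subseteq> z is exactly the condition that J be 2-step.
  Once J[n,n] is central, c([a,b],y,z) = -<[Jy,Jz],[a,b]>, and dc is the displayed six-term
  expression. For abelian J this expression is twice the cyclic form
  <[y,z],[w,u]> - <[u,z],[w,y]> + <[u,y],[w,z]>, which only sees the components in
  the orthogonal complement v of z and there equals -<j([u,y])z + j([y,z])u + j([z,u])y, w>.\<close>

lemma subspace_inner_representation:
  fixes g :: "'a::euclidean_space \<Rightarrow> real"
  assumes "subspace W" and "linear g"
  shows "\<exists>!u. u \<in> W \<and> (\<forall>w\<in>W. inner u w = g w)"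
proof (rule ex_ex1I)
  \<comment> \<open>adjoint g 1 represents g on the whole space; its W-component represents g on W.\<close>
  obtain u v where "u \<in> W" and v: "v \<in> orthogonal_comp W" and uv: "adjoint g 1 = u + v"
    using subspace_sum_orthogonal_comp[OF assms(1)] set_plus_elim by blast
  moreover have "inner u w = g w" if "w \<in> W" for w
  proof -
    have "inner w v = 0"
      using v that unfolding orthogonal_comp_def orthogonal_def by blast
    then have "inner w u = inner w (adjoint g 1)"
      by (simp add: uv inner_add_right)
    also have "\<dots> = g w"
      using adjoint_works[OF assms(2), of w 1] by simp
    finally show ?thesis
      by (simp add: inner_commute)
  qed
  ultimately show "\<exists>u. u \<in> W \<and> (\<forall>w\<in>W. inner u w = g w)"
    by blast
next
  fix u u'
  assume u: "u \<in> W \<and> (\<forall>w\<in>W. inner u w = g w)" and u': "u' \<in> W \<and> (\<forall>w\<in>W. inner u' w = g w)"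
  then have "u - u' \<in> W"
    using assms(1) by (simp add: subspace_diff)
  then have "inner (u - u') (u - u') = 0"
    using u u' by (simp add: inner_diff_left)
  then show "u = u'"
    by simp
qed

locale alternating_bilinear =
  fixes br :: "'a::real_vector \<Rightarrow> 'a \<Rightarrow> 'a"
  assumes bilinear: "bilinear br" and alternating: "br x x = 0"
begin

lemma anticomm: "br x y = - br y x"
proof -
  have "br (x + y) (x + y) = br x x + br x y + br y x + br y y"
    by (simp add: bilinear_ladd[OF bilinear] bilinear_radd[OF bilinear])
  then show ?thesis
    by (simp add: alternating eq_neg_iff_add_eq_0)
qed

lemma bracket_center_left: "c \<in> lie_center br \<Longrightarrow> br c y = 0"
  by (simp add: lie_center_def)

lemma bracket_center_right: "c \<in> lie_center br \<Longrightarrow> br y c = 0"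
  by (metis anticomm bracket_center_left neg_equal_0_iff_equal)

lemma bracket_add_center:
  assumes "c \<in> lie_center br"
  shows "br (x + c) y = br x y" and "br y (x + c) = br y x"
  using assms by (simp_all add: bilinear_ladd[OF bilinear] bilinear_radd[OF bilinear]
      bracket_center_left bracket_center_right)

lemma subspace_center: "subspace (lie_center br)"
  unfolding subspace_def lie_center_def
  by (simp add: bilinear_lzero[OF bilinear] bilinear_ladd[OF bilinear] bilinear_lmul[OF bilinear])

end

lemma jmap_characterization:
  fixes br :: "'a::euclidean_space \<Rightarrow> 'a \<Rightarrow> 'a"
  assumes "bilinear br"
  shows "jmap br x v \<in> orthogonal_comp (lie_center br)"
    and "w \<in> orthogonal_comp (lie_center br) \<Longrightarrow> inner (jmap br x v) w = inner x (br v w)"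
proof -
  have "linear (\<lambda>w. inner x (br v w))"
    using assms by (simp add: linear_iff bilinear_radd bilinear_rmul inner_add_right)
  from theI'[OF subspace_inner_representation[OF subspace_orthogonal_comp this]]
  show "jmap br x v \<in> orthogonal_comp (lie_center br)"
    and "w \<in> orthogonal_comp (lie_center br) \<Longrightarrow> inner (jmap br x v) w = inner x (br v w)"
    unfolding jmap_def by auto
qed

definition bracket_cycle_form :: "('a::real_inner \<Rightarrow> 'a \<Rightarrow> 'a) \<Rightarrow> 'a \<Rightarrow> 'a \<Rightarrow> 'a \<Rightarrow> 'a \<Rightarrow> real"
  where "bracket_cycle_form br w u y z =
      inner (br y z) (br w u) - inner (br u z) (br w y) + inner (br u y) (br w z)"

context
  fixes br :: "'a::euclidean_space \<Rightarrow> 'a \<Rightarrow> 'a"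
  assumes "alternating_bilinear br"
begin

interpretation alternating_bilinear br by fact

lemma inner_jmap_cycle:
  assumes "u \<in> orthogonal_comp (lie_center br)" "y \<in> orthogonal_comp (lie_center br)"
    "z \<in> orthogonal_comp (lie_center br)" "w \<in> orthogonal_comp (lie_center br)"
  shows "inner (jmap br (br u y) z + jmap br (br y z) u + jmap br (br z u) y) w
    = - bracket_cycle_form br w u y z"
  using assms anticomm[of z w] anticomm[of u w] anticomm[of z u] anticomm[of y w]
  by (simp add: inner_add_left jmap_characterization bilinear bracket_cycle_form_def)

lemma bracket_cycle_form_add_center:
  assumes "cw \<in> lie_center br" "cu \<in> lie_center br" "cy \<in> lie_center br" "cz \<in> lie_center br"
  shows "bracket_cycle_form br (w + cw) (u + cu) (y + cy) (z + cz) = bracket_cycle_form br w u y z"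
  using assms by (simp add: bracket_cycle_form_def bracket_add_center)

lemma jmap_cycle_eq_0_iff:
  "(\<forall>u \<in> orthogonal_comp (lie_center br). \<forall>y \<in> orthogonal_comp (lie_center br).
      \<forall>z \<in> orthogonal_comp (lie_center br).
        jmap br (br u y) z + jmap br (br y z) u + jmap br (br z u) y = 0)
   \<longleftrightarrow> (\<forall>w u y z. bracket_cycle_form br w u y z = 0)"
  (is "(\<forall>u \<in> ?V. \<forall>y \<in> ?V. \<forall>z \<in> ?V. ?S u y z = 0) \<longleftrightarrow> _")
proof
  assume cycle_0: "\<forall>u \<in> ?V. \<forall>y \<in> ?V. \<forall>z \<in> ?V. ?S u y z = 0"
  have decomp: "\<exists>p \<in> ?V. \<exists>c \<in> lie_center br. x = p + c" for x
    using subspace_sum_orthogonal_comp[OF subspace_center] set_plus_elim add.commute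
    by (metis UNIV_I)
  show "\<forall>w u y z. bracket_cycle_form br w u y z = 0"
  proof (intro allI)
    fix w u y z
    from decomp obtain pw pu py pz cw cu cy cz
      where "pw \<in> ?V" "pu \<in> ?V" "py \<in> ?V" "pz \<in> ?V"
        and "cw \<in> lie_center br" "cu \<in> lie_center br" "cy \<in> lie_center br" "cz \<in> lie_center br"
        and "w = pw + cw" "u = pu + cu" "y = py + cy" "z = pz + cz"
      by meson
    then show "bracket_cycle_form br w u y z = 0"
      using inner_jmap_cycle[of pu py pz pw] cycle_0 by (simp add: bracket_cycle_form_add_center)
  qed
next
  assume form_0: "\<forall>w u y z. bracket_cycle_form br w u y z = 0"
  show "\<forall>u \<in> ?V. \<forall>y \<in> ?V. \<forall>z \<in> ?V. ?S u y z = 0"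
  proof (intro ballI)
    fix u y z
    assume uyz: "u \<in> ?V" "y \<in> ?V" "z \<in> ?V"
    have "?S u y z \<in> ?V"
      by (simp add: jmap_characterization bilinear subspace_add subspace_orthogonal_comp)
    then have "inner (?S u y z) (?S u y z) = 0"
      using inner_jmap_cycle[OF uyz] form_0 by simp
    then show "?S u y z = 0"
      by simp
  qed
qed

end

lemma t_step_2_iff:
  assumes "two_step_nilpotent br"
  shows "t_step br J 2 \<longleftrightarrow> (\<forall>x y. J (br x y) \<in> lie_center br)"
proof -
  obtain x y where xy: "br x y \<noteq> 0" and nil: "\<And>x y z. br (br x y) z = 0"
    using assms by (auto simp: two_step_nilpotent_def)
  have "acs br J 0 \<noteq> UNIV"
    using xy by (metis UNIV_I acs.simps(1) singletonD)
  moreover have "acs br J 1 \<noteq> UNIV"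
    using xy by (auto simp: set_eq_iff)
  ultimately have "acs br J s \<noteq> UNIV" if "s < 2" for s
    using that by (metis One_nat_def less_2_cases)
  moreover have "acs br J 2 = UNIV \<longleftrightarrow> (\<forall>x y. J (br x y) \<in> lie_center br)"
    by (auto simp: numeral_2_eq_2 lie_center_def nil)
  ultimately show ?thesis
    by (auto simp: t_step_def)
qed

definition two_step_dc :: "('a::real_inner \<Rightarrow> 'a \<Rightarrow> 'a) \<Rightarrow> ('a \<Rightarrow> 'a) \<Rightarrow> 'a \<Rightarrow> 'a \<Rightarrow> 'a \<Rightarrow> 'a \<Rightarrow> real"
  where "two_step_dc br J w u y z =
      inner (br (J y) (J z)) (br w u) - inner (br (J u) (J z)) (br w y)
    + inner (br (J u) (J y)) (br w z) + inner (br (J w) (J z)) (br u y)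
    - inner (br (J w) (J y)) (br u z) + inner (br (J w) (J u)) (br y z)"

lemma abelian_two_step_dc:
  assumes "abelian_cs br J"
  shows "two_step_dc br J w u y z = 2 * bracket_cycle_form br w u y z"
  using assms by (simp add: abelian_cs_def two_step_dc_def bracket_cycle_form_def inner_commute)

locale hermitian_two_step = alternating_bilinear br for br :: "'a::real_inner \<Rightarrow> 'a \<Rightarrow> 'a" +
  fixes J :: "'a \<Rightarrow> 'a"
  assumes linear_J: "linear J" and J_J: "J (J x) = - x"
    and integrable: "nijenhuis br J x y = 0"
    and hermitian: "inner (J x) (J y) = inner x y"
    and two_step: "br (br x y) z = 0"
begin

lemma commutator_central: "br x y \<in> lie_center br"
  by (simp add: lie_center_def two_step)

lemma nijenhuis_center:
  assumes "s \<in> lie_center br"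
  shows "br (J s) (J y) = J (br (J s) y)"
  using integrable[of s y] assms
  by (simp add: nijenhuis_def bracket_center_left linear_0[OF linear_J])

lemma torsion_center_left:
  assumes "s \<in> lie_center br" "J s \<in> lie_center br"
  shows "torsion br J s y z = - inner (br (J y) (J z)) s"
  using assms by (simp add: torsion_def bracket_center_left bracket_center_right inner_commute)

lemma pluriclosed_J_center:
  assumes "pluriclosed br J" and s: "s \<in> lie_center br"
  shows "J s \<in> lie_center br"
proof -
  have "br (J s) t = 0" for t
  proof -
    define d where "d = br (J s) t"
    have Jd: "br (J s) (J t) = J d"
      unfolding d_def using s by (rule nijenhuis_center)
    have d_central: "d \<in> lie_center br" "J d \<in> lie_center br"
      using commutator_central[of "J s" t] commutator_central[of "J s" "J t"]
      by (simp_all add: Jd flip: d_def)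
    have t1: "torsion br J (br t (J s)) s (J t) = - inner d d"
    proof -
      have "br t (J s) = - d"
        unfolding d_def by (rule anticomm)
      then show ?thesis
        using s d_central
        by (simp add: torsion_def bilinear_lneg[OF bilinear] bilinear_rneg[OF bilinear]
            linear_neg[OF linear_J] J_J bracket_center_left bracket_center_right flip: d_def)
    qed
    have t2: "torsion br J (br t (J t)) s (J s) = 0"
      using s nijenhuis_center[OF commutator_central, of t "J t" s]
      by (simp add: torsion_def J_J linear_0[OF linear_J] bilinear_lneg[OF bilinear]
          bilinear_rneg[OF bilinear] bracket_center_left bracket_center_right)
    have t3: "torsion br J (br (J s) (J t)) s t = - inner d d"
    proof -
      have "J (J d) \<in> lie_center br"
        using d_central subspace_center by (simp add: J_J subspace_neg)
      then show ?thesis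
        using d_central by (simp add: Jd torsion_center_left hermitian)
    qed
    have "ce_d3 br (torsion br J) s t (J s) (J t) = 0"
      using assms(1) by (simp add: pluriclosed_def)
    moreover have torsion_0: "torsion br J 0 y z = 0" for y z
      by (simp add: torsion_def linear_0[OF linear_J] bilinear_lzero[OF bilinear]
          bilinear_rzero[OF bilinear])
    ultimately have "2 * inner d d = 0"
      using s by (simp add: ce_d3_def bracket_center_left t1 t2 t3)
    then show ?thesis
      by (simp add: d_def)
  qed
  then show ?thesis
    by (simp add: lie_center_def)
qed

lemma ce_d3_torsion_eq:
  assumes "\<And>x y. J (br x y) \<in> lie_center br"
  shows "ce_d3 br (torsion br J) w u y z = two_step_dc br J w u y z"
  by (simp add: ce_d3_def two_step_dc_def torsion_center_left commutator_central assms
      inner_commute)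

lemma pluriclosed_iff:
  "pluriclosed br J \<longleftrightarrow>
    (\<forall>x y. J (br x y) \<in> lie_center br) \<and> (\<forall>w u y z. two_step_dc br J w u y z = 0)"
  using pluriclosed_J_center[OF _ commutator_central] ce_d3_torsion_eq
  by (auto simp: pluriclosed_def)

lemma abelian_J_commutator_central:
  assumes "abelian_cs br J"
  shows "J (br x y) \<in> lie_center br"
  using assms[unfolded abelian_cs_def, rule_format, of "J (br x y)"]
  by (simp add: lie_center_def J_J bilinear_lneg[OF bilinear] two_step)

lemma abelian_pluriclosed_iff:
  assumes "abelian_cs br J"
  shows "pluriclosed br J \<longleftrightarrow> (\<forall>w u y z. bracket_cycle_form br w u y z = 0)"
  using assms by (simp add: pluriclosed_iff abelian_J_commutator_central abelian_two_step_dc)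

end

theorem mainTheorem16:
  fixes br :: "'a::euclidean_space \<Rightarrow> 'a \<Rightarrow> 'a" and J :: "'a \<Rightarrow> 'a"
  assumes "lie_algebra br" and "complex_structure br J" and "hermitian J"
    and "two_step_nilpotent br"
  shows "(pluriclosed br J \<longleftrightarrow>
           t_step br J 2 \<and>
           (\<forall>w u y z.
              inner (br (J y) (J z)) (br w u) - inner (br (J u) (J z)) (br w y)
            + inner (br (J u) (J y)) (br w z) + inner (br (J w) (J z)) (br u y)
            - inner (br (J w) (J y)) (br u z) + inner (br (J w) (J u)) (br y z) = 0))
       \<and> (abelian_cs br J \<longrightarrow>
           (pluriclosed br J \<longleftrightarrow>
             (\<forall>u \<in> orthogonal_comp (lie_center br). \<forall>y \<in> orthogonal_comp (lie_center br).
              \<forall>z \<in> orthogonal_comp (lie_center br).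
                jmap br (br u y) z + jmap br (br y z) u + jmap br (br z u) y = 0)))"
proof -
  interpret hermitian_two_step br J
    using assms unfolding lie_algebra_def complex_structure_def hermitian_def two_step_nilpotent_def
    by (intro hermitian_two_step.intro alternating_bilinear.intro hermitian_two_step_axioms.intro) auto
  show ?thesis
    unfolding two_step_dc_def[symmetric] t_step_2_iff[OF assms(4)]
      jmap_cycle_eq_0_iff[OF alternating_bilinear_axioms]
    using pluriclosed_iff abelian_pluriclosed_iff by blast
qed

end
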